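(* Let $\varphi_1,\varphi_2$ be Orlicz functions and $w$ a weight on $I=[0,\gamma)$. The following are equivalent: (i) $\varphi_1\prec\varphi_2$ when $\gamma=\infty$ (resp. $\varphi_1\prec_\infty\varphi_2$ when $\gamma<\infty$); (ii) $\mathcal M_{\varphi_2,w}\hookrightarrow\mathcal M_{\varphi_1,w}$, i.e. $\mathcal M_{\varphi_2,w}\subset\mathcal M_{\varphi_1,w}$ (with continuous inclusion).
   Context: Let $I=[0,\gamma)$, $0<\gamma\le\infty$, Lebesgue measure $m$, $L_0$ the measurable functions on $I$, $f^*$ the decreasing rearrangement of $f$. Orlicz function: convex $\varphi:[0,\infty)\to[0,\infty)$, $\varphi(0)=0$, $\varphi(u)>0$ for $u>0$. For Orlicz functions, $\varphi_1\prec\varphi_2$ means there is $b>0$ with $\varphi_1(u)\le\varphi_2(bu)$ for all $u\ge0$; $\varphi_1\prec_\infty\varphi_2$ means there are $b>0$, $u_0\ge0$ with $\varphi_1(u)\le\varphi_2(bu)$ for all $u\ge u_0$. Weight: positive decreasing locally integrable $w$ on $I$, $W(t)=\int_0^tw$, $W(\infty)=\infty$ if $\gamma=\infty$. Halperin level function $g^0$ of $g\ge0$ w.r.t. $w$: with $G(a,b)=\int_a^bg$, $W(a,b)=\int_a^bw$, $(a,b]$ is a level interval if $G(a,t)/W(a,t)\le G(a,b)/W(a,b)$ for all $t\in(a,b]$, maximal if not contained in another; $g^0=\frac{G(a,b)}{W(a,b)}w$ on each maximal level interval and $g^0=g$ elsewhere. $Q_{\varphi,w}(f)=\int_I\varphi((f^*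 )^0/w)w$; $\mathcal M_{\varphi,w}=\{f:Q_{\varphi,w}(kf)<\infty\text{ for some }k>0\}$ with Luxemburg norm $\|f\|_{\mathcal M_{\varphi,w}}=\inf\{\epsilon>0:Q_{\varphi,w}(f/\epsilon)\le1\}$. *)

theory Defs
  imports "HOL-Analysis.Analysis"
begin

definition Ival :: "ereal \<Rightarrow> real set" where
  "Ival \<gamma> = {t. 0 \<le> t \<and> ereal t < \<gamma>}"

definition orlicz_fun :: "(real \<Rightarrow> real) \<Rightarrow> bool" where
  "orlicz_fun \<phi> \<longleftrightarrow> convex_on {0..} \<phi> \<and> \<phi> 0 = 0 \<and> (\<forall>u>0. \<phi> u > 0)"

definition orlicz_prec :: "(real \<Rightarrow> real) \<Rightarrow> (real \<Rightarrow> real) \<Rightarrow> bool" where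
  "orlicz_prec \<phi>1 \<phi>2 \<longleftrightarrow> (\<exists>b>0. \<forall>u\<ge>0. \<phi>1 u \<le> \<phi>2 (b * u))"

definition orlicz_prec_inf :: "(real \<Rightarrow> real) \<Rightarrow> (real \<Rightarrow> real) \<Rightarrow> bool" where
  "orlicz_prec_inf \<phi>1 \<phi>2 \<longleftrightarrow> (\<exists>b>0. \<exists>u0\<ge>0. \<forall>u\<ge>u0. \<phi>1 u \<le> \<phi>2 (b * u))"

definition weight :: "ereal \<Rightarrow> (real \<Rightarrow> real) \<Rightarrow> bool" where
  "weight \<gamma> w \<longleftrightarrow>
     (\<forall>t\<in>Ival \<gamma>. w t > 0) \<and>
     (\<forall>s\<in>Ival \<gamma>. \<forall>t\<in>Ival \<gamma>. s \<le> t \<longrightarrow> w t \<le> w s) \<and>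
     (\<forall>b. 0 \<le> b \<and> ereal b < \<gamma> \<longrightarrow> set_integrable lborel {0..b} w) \<and>
     (\<gamma> = \<infinity> \<longrightarrow> (\<integral>\<^sup>+ t\<in>{0..}. ennreal (w t) \<partial>lborel) = \<infinity>)"

definition distf :: "ereal \<Rightarrow> (real \<Rightarrow> real) \<Rightarrow> ennreal \<Rightarrow> ennreal" where
  "distf \<gamma> f s = emeasure lebesgue {x \<in> Ival \<gamma>. ennreal \<bar>f x\<bar> > s}"

definition rearr :: "ereal \<Rightarrow> (real \<Rightarrow> real) \<Rightarrow> real \<Rightarrow> ennreal" where
  "rearr \<gamma> f t = Inf {s. distf \<gamma> f s \<le> ennreal t}"

definition Gint :: "(real \<Rightarrow> ennreal) \<Rightarrow> real \<Rightarrow> real \<Rightarrow> ennreal" where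
  "Gint g a b = (\<integral>\<^sup>+ t\<in>{a<..b}. g t \<partial>lborel)"

definition Wint :: "(real \<Rightarrow> real) \<Rightarrow> real \<Rightarrow> real \<Rightarrow> ennreal" where
  "Wint w a b = (\<integral>\<^sup>+ t\<in>{a<..b}. ennreal (w t) \<partial>lborel)"

definition level_interval :: "ereal \<Rightarrow> (real \<Rightarrow> real) \<Rightarrow> (real \<Rightarrow> ennreal) \<Rightarrow> real \<Rightarrow> real \<Rightarrow> bool" where
  "level_interval \<gamma> w g a b \<longleftrightarrow> 0 \<le> a \<and> a < b \<and> ereal b < \<gamma> \<and>
     (\<forall>t\<in>{a<..b}. Gint g a t / Wint w a t \<le> Gint g a b / Wint w a b)"

definition max_level_interval :: "ereal \<Rightarrow> (real \<Rightarrow> real) \<Rightarrow> (real \<Rightarrow> ennreal) \<Rightarrow> real \<Rightarrow> real \<Rightarrow> bool" where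
  "max_level_interval \<gamma> w g a b \<longleftrightarrow> level_interval \<gamma> w g a b \<and>
     (\<forall>a' b'. level_interval \<gamma> w g a' b' \<and> {a<..b} \<subseteq> {a'<..b'} \<longrightarrow> a' = a \<and> b' = b)"

definition level_fun :: "ereal \<Rightarrow> (real \<Rightarrow> real) \<Rightarrow> (real \<Rightarrow> ennreal) \<Rightarrow> real \<Rightarrow> ennreal" where
  "level_fun \<gamma> w g t =
     (if \<exists>a b. max_level_interval \<gamma> w g a b \<and> t \<in> {a<..b}
      then (let (a, b) = (SOME (a, b). max_level_interval \<gamma> w g a b \<and> t \<in> {a<..b})
            in Gint g a b / Wint w a b * ennreal (w t))
      else g t)"

definition phi_ext :: "(real \<Rightarrow> real) \<Rightarrow> ennreal \<Rightarrow> ennreal" where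
  "phi_ext \<phi> x = (if x = \<infinity> then \<infinity> else ennreal (\<phi> (enn2real x)))"

definition Qmod :: "ereal \<Rightarrow> (real \<Rightarrow> real) \<Rightarrow> (real \<Rightarrow> real) \<Rightarrow> (real \<Rightarrow> real) \<Rightarrow> ennreal" where
  "Qmod \<gamma> \<phi> w f =
     (\<integral>\<^sup>+ t\<in>Ival \<gamma>. phi_ext \<phi> (level_fun \<gamma> w (rearr \<gamma> f) t / ennreal (w t)) * ennreal (w t) \<partial>lborel)"

definition Mspace :: "ereal \<Rightarrow> (real \<Rightarrow> real) \<Rightarrow> (real \<Rightarrow> real) \<Rightarrow> (real \<Rightarrow> real) set" where
  "Mspace \<gamma> \<phi> w = {f. f \<in> borel_measurable (restrict_space lebesgue (Ival \<gamma>)) \<and>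
                       (\<exists>k>0. Qmod \<gamma> \<phi> w (\<lambda>x. k * f x) < \<infinity>)}"

definition Mnorm :: "ereal \<Rightarrow> (real \<Rightarrow> real) \<Rightarrow> (real \<Rightarrow> real) \<Rightarrow> (real \<Rightarrow> real) \<Rightarrow> real" where
  "Mnorm \<gamma> \<phi> w f = Inf {\<epsilon>. \<epsilon> > 0 \<and> Qmod \<gamma> \<phi> w (\<lambda>x. f x / \<epsilon>) \<le> 1}"

end

theory Submission
  imports Defs
begin

text \<open>
  Sufficiency: a pointwise bound \<open>\<phi>1 u \<le> \<phi>2 (b u) + K\<close> passes through the modular, giving
  \<open>Q_\<phi>1(f) \<le> Q_\<phi>2(b f) + K w(0) m(I)\<close>, where \<open>K = 0\<close> if \<open>\<gamma> = \<infinity>\<close> and \<open>m(I) < \<infinity>\<close> otherwise.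
  Convexity (\<open>Q(c f) \<le> c Q(f)\<close> for \<open>c \<le> 1\<close>) turns this into a bound on the Luxemburg norms.

  Necessity: test the embedding on \<open>\<chi>[0,a]\<close>. Its decreasing rearrangement is \<open>\<chi>[0,a)\<close>,
  whose only maximal level interval is \<open>(0,a]\<close>, so \<open>Q_\<phi>(c \<chi>[0,a]) = \<phi>(c a / W(a)) W(a)\<close>.
  Comparing the two norms of \<open>\<chi>[0,a]\<close> yields \<open>\<phi>1 u \<le> \<phi>2 ((C + 1) u)\<close> whenever
  \<open>W(a) \<phi>1 u = 1\<close> for some \<open>a \<in> I\<close>. Since \<open>W\<close> is continuous, this covers all \<open>u > 0\<close> when
  \<open>W(\<infinity>) = \<infinity>\<close>, and all large \<open>u\<close> when \<open>\<gamma> < \<infinity>\<close>.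
\<close>

section \<open>Integrals of non-measurable functions\<close>

text \<open>
  The integrand of \<^const>\<open>Qmod\<close> is not known to be measurable (the level function is defined
  by choice), so the integral laws below are proved for arbitrary integrands via a measurable
  minorant with the same integral.
\<close>

lemma nn_integral_measurable_minorant:
  fixes F :: "'a \<Rightarrow> ennreal"
  shows "\<exists>h. h \<in> borel_measurable M \<and> (\<forall>x. h x \<le> F x) \<and> integral\<^sup>N M h = integral\<^sup>N M F"
proof -
  let ?A = "integral\<^sup>S M ` {g. simple_function M g \<and> g \<le> F}"
  have "integral\<^sup>S M (\<lambda>_. 0) \<in> ?A" by (intro imageI) (auto simp: le_fun_def)
  then have ne: "?A \<noteq> {}" by blast
  obtain f :: "nat \<Rightarrow> ennreal" where f: "range f \<subseteq> ?A" "Sup ?A = (SUP i. f i)"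
    using ennreal_Sup_countable_SUP[OF ne] by blast
  have ex: "\<forall>n. \<exists>g. simple_function M g \<and> g \<le> F \<and> integral\<^sup>S M g = f n"
  proof
    fix n
    have "f n \<in> ?A" using f(1) by blast
    then obtain g where "g \<in> {g. simple_function M g \<and> g \<le> F}" "f n = integral\<^sup>S M g"
      by (rule imageE)
    then show "\<exists>g. simple_function M g \<and> g \<le> F \<and> integral\<^sup>S M g = f n" by auto
  qed
  obtain g where g0: "\<forall>n. simple_function M (g n) \<and> g n \<le> F \<and> integral\<^sup>S M (g n) = f n"
    using choice[OF ex] by blast
  then have g: "\<And>n. simple_function M (g n)" "\<And>n. g n \<le> F" "\<And>n. integral\<^sup>S M (g n) = f n"
    by auto
  define h where "h x = (SUP n. g n x)" for x
  have hm: "h \<in> borel_measurable M" unfolding h_def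
    using g(1) by (intro borel_measurable_SUP) (auto intro: borel_measurable_simple_function)
  have hle: "\<forall>x. h x \<le> F x" unfolding h_def using g(2) by (auto intro!: SUP_least simp: le_fun_def)
  have "integral\<^sup>N M F = (SUP i. f i)" unfolding nn_integral_def using f(2) by simp
  also have "\<dots> \<le> integral\<^sup>N M h"
  proof (rule SUP_least)
    fix n
    have "f n = integral\<^sup>N M (g n)" using g by (simp add: nn_integral_eq_simple_integral)
    also have "\<dots> \<le> integral\<^sup>N M h"
      by (rule nn_integral_mono) (auto simp: h_def intro: SUP_upper)
    finally show "f n \<le> integral\<^sup>N M h" .
  qed
  finally have "integral\<^sup>N M F \<le> integral\<^sup>N M h" .
  moreover have "integral\<^sup>N M h \<le> integral\<^sup>N M F" using hle by (intro nn_integral_mono) auto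
  ultimately show ?thesis using hm hle by (intro exI[of _ h]) auto
qed

lemma nn_integral_add_le_measurable:
  fixes F G :: "'a \<Rightarrow> ennreal"
  assumes G: "G \<in> borel_measurable M"
  shows "(\<integral>\<^sup>+x. F x + G x \<partial>M) \<le> integral\<^sup>N M F + integral\<^sup>N M G"
proof -
  obtain H where H: "H \<in> borel_measurable M" "\<And>x. H x \<le> F x + G x"
     "integral\<^sup>N M H = (\<integral>\<^sup>+x. F x + G x \<partial>M)"
    using nn_integral_measurable_minorant[of M "\<lambda>x. F x + G x"] by blast
  have "(\<integral>\<^sup>+x. F x + G x \<partial>M) = integral\<^sup>N M H" using H by simp
  also have "\<dots> \<le> (\<integral>\<^sup>+x. (if G x = top then 0 else H x - G x) + G x \<partial>M)"
  proof (rule nn_integral_mono)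
    fix x
    show "H x \<le> (if G x = top then 0 else H x - G x) + G x"
    proof (cases "G x = top")
      case False
      have "H x \<le> H x - G x + G x"
        unfolding diff_add_self_ennreal by (cases "G x \<le> H x") auto
      then show ?thesis using False by simp
    qed simp
  qed
  also have "\<dots> = (\<integral>\<^sup>+x. (if G x = top then 0 else H x - G x) \<partial>M) + integral\<^sup>N M G"
    using H G by (intro nn_integral_add) auto
  also have "\<dots> \<le> integral\<^sup>N M F + integral\<^sup>N M G"
  proof (intro add_mono nn_integral_mono order_refl)
    fix x
    have "H x \<le> G x + F x" using H(2)[of x] by (simp add: add.commute)
    then show "(if G x = top then 0 else H x - G x) \<le> F x"
      by (simp add: ennreal_minus_le_iff)
  qed
  finally show ?thesis .
qed

lemma nn_integral_cmult_pos:
  fixes F :: "'a \<Rightarrow> ennreal"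
  assumes c: "c > 0"
  shows "(\<integral>\<^sup>+x. ennreal c * F x \<partial>M) = ennreal c * integral\<^sup>N M F"
proof -
  have cancel: "ennreal (1/d) * (ennreal d * x) = x" "ennreal d * (ennreal (1/d) * x) = x"
    if "d > 0" for d :: real and x
    using that by (simp_all add: mult.assoc[symmetric] ennreal_mult[symmetric])
  have le: "(\<integral>\<^sup>+x. ennreal d * G x \<partial>M) \<le> ennreal d * integral\<^sup>N M G"
    if d: "d > 0" for d :: real and G :: "'a \<Rightarrow> ennreal"
  proof -
    obtain H where H: "H \<in> borel_measurable M" "\<And>x. H x \<le> ennreal d * G x"
       "integral\<^sup>N M H = (\<integral>\<^sup>+x. ennreal d * G x \<partial>M)"
      using nn_integral_measurable_minorant[of M "\<lambda>x. ennreal d * G x"] by blast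
    have "(\<integral>\<^sup>+x. ennreal d * G x \<partial>M) = (\<integral>\<^sup>+x. ennreal d * (ennreal (1/d) * H x) \<partial>M)"
      by (simp only: H(3)[symmetric] cancel(2)[OF d])
    also have "\<dots> = ennreal d * (\<integral>\<^sup>+x. ennreal (1/d) * H x \<partial>M)"
      using H(1) by (intro nn_integral_cmult) auto
    also have "\<dots> \<le> ennreal d * integral\<^sup>N M G"
    proof (intro mult_left_mono nn_integral_mono)
      fix x
      have "ennreal (1/d) * H x \<le> ennreal (1/d) * (ennreal d * G x)"
        by (intro mult_left_mono H(2)) simp
      then show "ennreal (1/d) * H x \<le> G x"
        by (simp only: cancel(1)[OF d])
    qed simp
    finally show ?thesis .
  qed
  have "integral\<^sup>N M F = (\<integral>\<^sup>+x. ennreal (1/c) * (ennreal c * F x) \<partial>M)"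
    by (simp only: cancel(1)[OF c])
  also have "\<dots> \<le> ennreal (1/c) * (\<integral>\<^sup>+x. ennreal c * F x \<partial>M)"
    using c by (intro le) auto
  finally have "ennreal c * integral\<^sup>N M F \<le> ennreal c * (ennreal (1/c) * (\<integral>\<^sup>+x. ennreal c * F x \<partial>M))"
    by (rule mult_left_mono) simp
  then have "ennreal c * integral\<^sup>N M F \<le> (\<integral>\<^sup>+x. ennreal c * F x \<partial>M)"
    by (simp only: cancel(2)[OF c])
  with le[OF c, of F] show ?thesis by (rule antisym)
qed

section \<open>Scaling\<close>

lemma ennreal_Inf_cmult:
  fixes S :: "ennreal set"
  assumes c: "c > 0"
  shows "Inf ((\<lambda>s. ennreal c * s) ` S) = ennreal c * Inf S"
proof (rule antisym)
  have "ennreal (1/c) * Inf ((\<lambda>s. ennreal c * s) ` S) \<le> Inf S"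
  proof (rule Inf_greatest)
    fix s assume "s \<in> S"
    then have "Inf ((\<lambda>s. ennreal c * s) ` S) \<le> ennreal c * s" by (auto intro: Inf_lower)
    then have "ennreal (1/c) * Inf ((\<lambda>s. ennreal c * s) ` S) \<le> ennreal (1/c) * (ennreal c * s)"
      by (intro mult_left_mono) auto
    also have "\<dots> = s" using c by (simp add: mult.assoc[symmetric] ennreal_mult[symmetric])
    finally show "ennreal (1/c) * Inf ((\<lambda>s. ennreal c * s) ` S) \<le> s" .
  qed
  then have "ennreal c * (ennreal (1/c) * Inf ((\<lambda>s. ennreal c * s) ` S)) \<le> ennreal c * Inf S"
    by (intro mult_left_mono) auto
  then show "Inf ((\<lambda>s. ennreal c * s) ` S) \<le> ennreal c * Inf S"
    using c by (simp add: mult.assoc[symmetric] ennreal_mult[symmetric])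
  show "ennreal c * Inf S \<le> Inf ((\<lambda>s. ennreal c * s) ` S)"
    by (rule Inf_greatest) (auto intro!: mult_left_mono Inf_lower)
qed

lemma distf_cmult:
  assumes c: "c > 0"
  shows "distf \<gamma> (\<lambda>x. c * f x) s = distf \<gamma> f (s / ennreal c)"
proof -
  have "ennreal \<bar>c * f x\<bar> = ennreal c * ennreal \<bar>f x\<bar>" for x
    using c by (simp add: abs_mult ennreal_mult)
  then show ?thesis
    unfolding distf_def using c by (simp add: divide_less_ennreal mult.commute)
qed

lemma rearr_cmult:
  assumes c: "c > 0"
  shows "rearr \<gamma> (\<lambda>x. c * f x) t = ennreal c * rearr \<gamma> f t"
proof -
  have "{s. distf \<gamma> (\<lambda>x. c * f x) s \<le> ennreal t} = (\<lambda>s. ennreal c * s) ` {s. distf \<gamma> f s \<le> ennreal t}"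
  proof (rule set_eqI, rule iffI)
    fix s assume "s \<in> {s. distf \<gamma> (\<lambda>x. c * f x) s \<le> ennreal t}"
    then have "s / ennreal c \<in> {s. distf \<gamma> f s \<le> ennreal t}" by (simp add: distf_cmult[OF c])
    moreover have "s = ennreal c * (s / ennreal c)"
      using c by (simp add: ennreal_times_divide mult.commute[of "ennreal c"] mult_divide_eq_ennreal)
    ultimately show "s \<in> (\<lambda>s. ennreal c * s) ` {s. distf \<gamma> f s \<le> ennreal t}" by blast
  next
    fix s assume "s \<in> (\<lambda>s. ennreal c * s) ` {s. distf \<gamma> f s \<le> ennreal t}"
    then obtain s' where "s = ennreal c * s'" "distf \<gamma> f s' \<le> ennreal t" by auto
    moreover have "(ennreal c * s') / ennreal c = s'"
      using c by (simp add: mult.commute[of "ennreal c"] mult_divide_eq_ennreal)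
    ultimately show "s \<in> {s. distf \<gamma> (\<lambda>x. c * f x) s \<le> ennreal t}" by (simp add: distf_cmult[OF c])
  qed
  then show ?thesis unfolding rearr_def using ennreal_Inf_cmult[OF c] by simp
qed

lemma Gint_cmult:
  assumes c: "c > 0"
  shows "Gint (\<lambda>t. ennreal c * g t) a b = ennreal c * Gint g a b"
  unfolding Gint_def using nn_integral_cmult_pos[OF c, of lborel "\<lambda>t. g t * indicator {a<..b} t"]
  by (simp add: mult.assoc)

lemma level_interval_cmult:
  assumes c: "c > 0"
  shows "level_interval \<gamma> w (\<lambda>t. ennreal c * g t) = level_interval \<gamma> w g"
proof (intro ext)
  fix a b
  have "(ennreal c * x / y \<le> ennreal c * x' / y') \<longleftrightarrow> (x / y \<le> x' / y')" for x y x' y' :: ennreal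
    using c by (simp add: ennreal_times_divide[symmetric] ennreal_mult_le_mult_iff)
  then show "level_interval \<gamma> w (\<lambda>t. ennreal c * g t) a b = level_interval \<gamma> w g a b"
    unfolding level_interval_def Gint_cmult[OF c] by simp
qed

lemma level_fun_cmult:
  assumes c: "c > 0"
  shows "level_fun \<gamma> w (\<lambda>t. ennreal c * g t) t = ennreal c * level_fun \<gamma> w g t"
proof -
  have "max_level_interval \<gamma> w (\<lambda>t. ennreal c * g t) = max_level_interval \<gamma> w g"
    unfolding max_level_interval_def[abs_def] level_interval_cmult[OF c] ..
  then show ?thesis unfolding level_fun_def Gint_cmult[OF c]
    by (auto simp: Let_def ennreal_times_divide[symmetric] mult.assoc split: prod.split)
qed

lemma level_fun_rearr_cmult:
  assumes c: "c > 0"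
  shows "level_fun \<gamma> w (rearr \<gamma> (\<lambda>x. c * f x)) t = ennreal c * level_fun \<gamma> w (rearr \<gamma> f) t"
proof -
  have "rearr \<gamma> (\<lambda>x. c * f x) = (\<lambda>t. ennreal c * rearr \<gamma> f t)"
    using rearr_cmult[OF c] by auto
  then show ?thesis using level_fun_cmult[OF c] by simp
qed

section \<open>Orlicz functions\<close>

lemma orlicz_fun_nonneg:
  assumes "orlicz_fun \<phi>" "0 \<le> x"
  shows "0 \<le> \<phi> x"
  using assms unfolding orlicz_fun_def by (cases "x = 0") (auto simp: less_imp_le)

lemma orlicz_fun_cmult_le:
  assumes "orlicz_fun \<phi>" "0 \<le> c" "c \<le> 1" "0 \<le> x"
  shows "\<phi> (c * x) \<le> c * \<phi> x"
proof -
  have cv: "convex_on {0..} \<phi>" and z: "\<phi> 0 = 0" using assms(1) unfolding orlicz_fun_def by auto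
  have "\<phi> ((1 - c) *\<^sub>R 0 + c *\<^sub>R x) \<le> (1 - c) * \<phi> 0 + c * \<phi> x"
    using convex_onD[OF cv, of c 0 x] assms by auto
  then show ?thesis using z by simp
qed

lemma orlicz_fun_mono:
  assumes "orlicz_fun \<phi>" "0 \<le> x" "x \<le> y"
  shows "\<phi> x \<le> \<phi> y"
proof (cases "y = 0")
  case True then show ?thesis using assms by simp
next
  case False
  then have y: "y > 0" using assms by simp
  have "\<phi> ((x / y) * y) \<le> (x / y) * \<phi> y"
    using assms y by (intro orlicz_fun_cmult_le) (auto simp: divide_le_eq)
  also have "\<dots> \<le> \<phi> y" using assms y orlicz_fun_nonneg[OF assms(1), of y]
    by (intro mult_left_le_one_le) (auto simp: divide_le_eq)
  finally show ?thesis using y by simp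
qed

lemma orlicz_fun_strict_mono:
  assumes "orlicz_fun \<phi>" "0 \<le> x" "x < y"
  shows "\<phi> x < \<phi> y"
proof -
  have y: "y > 0" using assms by simp
  have py: "\<phi> y > 0" using assms(1) y unfolding orlicz_fun_def by auto
  have "\<phi> ((x / y) * y) \<le> (x / y) * \<phi> y"
    using assms y by (intro orlicz_fun_cmult_le) (auto simp: divide_le_eq)
  also have "\<dots> < \<phi> y" using assms y py
    by (simp add: divide_less_eq mult_less_cancel_right1 mult.commute)
  finally show ?thesis using y by simp
qed

lemma orlicz_fun_ge_linear:
  assumes "orlicz_fun \<phi>" "1 \<le> x"
  shows "x * \<phi> 1 \<le> \<phi> x"
proof -
  have "\<phi> ((1 / x) * x) \<le> (1 / x) * \<phi> x" using assms by (intro orlicz_fun_cmult_le) auto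
  then show ?thesis using assms(2) by (simp add: field_simps)
qed

lemma phi_ext_cmult_le:
  assumes "orlicz_fun \<phi>" "0 < c" "c \<le> 1"
  shows "phi_ext \<phi> (ennreal c * y) \<le> ennreal c * phi_ext \<phi> y"
proof (cases "y = top")
  case True then show ?thesis using assms by (simp add: phi_ext_def ennreal_mult_top)
next
  case False
  then obtain r where r: "y = ennreal r" "0 \<le> r" by (cases y) auto
  have "phi_ext \<phi> (ennreal c * y) = ennreal (\<phi> (c * r))"
    using r assms by (simp add: phi_ext_def ennreal_mult[symmetric])
  also have "\<dots> \<le> ennreal (c * \<phi> r)" using orlicz_fun_cmult_le[OF assms(1), of c r] assms r
    by (intro ennreal_leI) auto
  also have "\<dots> = ennreal c * phi_ext \<phi> y"
    using r assms orlicz_fun_nonneg[OF assms(1) r(2)] by (simp add: phi_ext_def ennreal_mult)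
  finally show ?thesis .
qed

lemma phi_ext_le_phi_ext_cmult_add:
  assumes "\<forall>x\<ge>0. \<phi>1 x \<le> \<phi>2 (b * x) + K" "b > 0" "K \<ge> 0"
  shows "phi_ext \<phi>1 y \<le> phi_ext \<phi>2 (ennreal b * y) + ennreal K"
proof (cases "y = top")
  case True then show ?thesis using assms by (simp add: phi_ext_def ennreal_mult_top)
next
  case False
  then obtain r where r: "y = ennreal r" "0 \<le> r" by (cases y) auto
  have "phi_ext \<phi>1 y = ennreal (\<phi>1 r)" using r by (simp add: phi_ext_def)
  also have "\<dots> \<le> ennreal (\<phi>2 (b * r) + K)" using assms r by (intro ennreal_leI) auto
  also have "\<dots> \<le> ennreal (\<phi>2 (b * r)) + ennreal K"
  proof (cases "\<phi>2 (b * r) \<ge> 0")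
    case True then show ?thesis using assms by (simp add: ennreal_plus)
  next
    case False
    then have "ennreal (\<phi>2 (b * r) + K) \<le> ennreal K" by (intro ennreal_leI) auto
    then show ?thesis by (simp add: add_increasing)
  qed
  also have "ennreal (\<phi>2 (b * r)) = phi_ext \<phi>2 (ennreal b * y)"
    using r assms by (simp add: phi_ext_def ennreal_mult[symmetric])
  finally show ?thesis .
qed

lemma phi_ext_mult_le_phi_ext_cmult_add:
  assumes "\<forall>x\<ge>0. \<phi>1 x \<le> \<phi>2 (b * x) + K" "b > 0" "K \<ge> 0" "v \<le> V"
  shows "phi_ext \<phi>1 y * ennreal v \<le> phi_ext \<phi>2 (ennreal b * y) * ennreal v + ennreal K * ennreal V"
proof -
  have "phi_ext \<phi>1 y * ennreal v \<le> (phi_ext \<phi>2 (ennreal b * y) + ennreal K) * ennreal v"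
    using phi_ext_le_phi_ext_cmult_add[OF assms(1-3)] by (rule mult_right_mono) simp
  also have "\<dots> \<le> phi_ext \<phi>2 (ennreal b * y) * ennreal v + ennreal K * ennreal V"
    using assms(4) by (simp add: distrib_right add_left_mono mult_left_mono ennreal_leI)
  finally show ?thesis .
qed

section \<open>Weights\<close>

text \<open>Only meaningful where \<^const>\<open>Wint\<close> is finite, i.e. on subintervals of \<open>I\<close>;
  elsewhere \<^const>\<open>enn2real\<close> returns \<open>0\<close>.\<close>
definition Wint_real :: "(real \<Rightarrow> real) \<Rightarrow> real \<Rightarrow> real \<Rightarrow> real" where
  "Wint_real w x y = enn2real (Wint w x y)"

lemma Ival_memI: "0 \<le> t \<Longrightarrow> ereal t < \<gamma> \<Longrightarrow> t \<in> Ival \<gamma>"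
  by (simp add: Ival_def)

lemma ereal_le_less_trans: "x \<le> y \<Longrightarrow> ereal y < \<gamma> \<Longrightarrow> ereal x < \<gamma>"
  by (metis ereal_less_eq(3) order_le_less_trans)

lemma Wint_real_nonneg: "0 \<le> Wint_real w x y"
  unfolding Wint_real_def by simp

lemma Wint_real_0: "Wint_real w 0 0 = 0"
  unfolding Wint_real_def Wint_def by simp

context
  fixes \<gamma> :: ereal and w :: "real \<Rightarrow> real"
  assumes w: "weight \<gamma> w"
begin

lemma weight_pos: "t \<in> Ival \<gamma> \<Longrightarrow> w t > 0" using w unfolding weight_def by auto

lemma weight_antimono: "s \<in> Ival \<gamma> \<Longrightarrow> t \<in> Ival \<gamma> \<Longrightarrow> s \<le> t \<Longrightarrow> w t \<le> w s"
  using w unfolding weight_def by auto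

lemma Wint_integrand_measurable:
  assumes "0 \<le> x" "ereal y < \<gamma>"
  shows "(\<lambda>t. ennreal (w t) * indicator {x<..y} t) \<in> borel_measurable lborel"
proof -
  show ?thesis
  proof (cases "{x<..y} = {}")
    case True then show ?thesis by simp
  next
    case False
    then have y: "0 \<le> y" using assms by auto
    have "set_integrable lborel {0..y} w" using w y assms unfolding weight_def by auto
    then have m: "(\<lambda>t. indicator {0..y} t *\<^sub>R w t) \<in> borel_measurable lborel"
      unfolding set_integrable_def by (rule borel_measurable_integrable)
    have "(\<lambda>t. ennreal (indicator {0..y} t *\<^sub>R w t) * indicator {x<..y} t) \<in> borel_measurable lborel"
      using m by measurable
    moreover have "(\<lambda>t. ennreal (indicator {0..y} t *\<^sub>R w t) * indicator {x<..y} t) = (\<lambda>t. ennreal (w t) * indicator {x<..y} t)"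
      using assms by (auto simp: indicator_def fun_eq_iff)
    ultimately show ?thesis by simp
  qed
qed

lemma Wint_le:
  assumes "0 \<le> x" "x \<le> y" "ereal y < \<gamma>"
  shows "Wint w x y \<le> ennreal ((y - x) * w x)"
proof -
  have xI: "x \<in> Ival \<gamma>" using assms by (intro Ival_memI) (use ereal_le_less_trans[of x y] in auto)
  have "Wint w x y \<le> (\<integral>\<^sup>+t. ennreal (w x) * indicator {x<..y} t \<partial>lborel)"
    unfolding Wint_def
  proof (intro nn_integral_mono)
    fix t show "ennreal (w t) * indicator {x<..y} t \<le> ennreal (w x) * indicator {x<..y} t"
    proof (cases "t \<in> {x<..y}")
      case True
      then have "t \<in> Ival \<gamma>" using assms by (intro Ival_memI) (use ereal_le_less_trans[of t y] in auto)
      then have "w t \<le> w x" using True xI by (intro weight_antimono) auto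
      then show ?thesis using True by (auto intro: ennreal_leI)
    qed simp
  qed
  also have "\<dots> = ennreal ((y - x) * w x)"
    using assms weight_pos[OF xI] by (simp add: nn_integral_cmult_indicator ennreal_mult[symmetric] mult.commute)
  finally show ?thesis .
qed

lemma Wint_ge:
  assumes "0 \<le> x" "x \<le> y" "ereal y < \<gamma>"
  shows "ennreal ((y - x) * w y) \<le> Wint w x y"
proof -
  have yI: "y \<in> Ival \<gamma>" using assms by (intro Ival_memI) auto
  have "ennreal ((y - x) * w y) = (\<integral>\<^sup>+t. ennreal (w y) * indicator {x<..y} t \<partial>lborel)"
    using assms weight_pos[OF yI] by (simp add: nn_integral_cmult_indicator ennreal_mult[symmetric] mult.commute)
  also have "\<dots> \<le> Wint w x y"
    unfolding Wint_def
  proof (intro nn_integral_mono)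
    fix t show "ennreal (w y) * indicator {x<..y} t \<le> ennreal (w t) * indicator {x<..y} t"
    proof (cases "t \<in> {x<..y}")
      case True
      then have "t \<in> Ival \<gamma>" using assms by (intro Ival_memI) (use ereal_le_less_trans[of t y] in auto)
      then have "w y \<le> w t" using True yI by (intro weight_antimono) auto
      then show ?thesis using True by (auto intro: ennreal_leI)
    qed simp
  qed
  finally show ?thesis .
qed

lemma Wint_split:
  assumes "0 \<le> x" "x \<le> y" "y \<le> z" "ereal z < \<gamma>"
  shows "Wint w x z = Wint w x y + Wint w y z"
proof -
  have "(\<lambda>t. ennreal (w t) * indicator {x<..z} t) = (\<lambda>t. ennreal (w t) * indicator {x<..y} t + ennreal (w t) * indicator {y<..z} t)"
    using assms by (auto simp: indicator_def fun_eq_iff)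
  moreover have y: "ereal y < \<gamma>" by (rule ereal_le_less_trans[OF assms(3,4)])
  have m1: "(\<lambda>t. ennreal (w t) * indicator {x<..y} t) \<in> borel_measurable lborel"
    by (rule Wint_integrand_measurable) (use assms y in auto)
  have m2: "(\<lambda>t. ennreal (w t) * indicator {y<..z} t) \<in> borel_measurable lborel"
    by (rule Wint_integrand_measurable) (use assms y in auto)
  ultimately show ?thesis unfolding Wint_def using nn_integral_add[OF m1 m2] by simp
qed

lemma Wint_eq_Wint_real:
  assumes "0 \<le> x" "x \<le> y" "ereal y < \<gamma>"
  shows "Wint w x y = ennreal (Wint_real w x y)"
proof -
  have "Wint w x y < top" using le_less_trans[OF Wint_le[OF assms]] by simp
  then show ?thesis unfolding Wint_real_def by (simp add: less_top)
qed

lemma Wint_real_bounds: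
  assumes "0 \<le> x" "x \<le> y" "ereal y < \<gamma>"
  shows "(y - x) * w y \<le> Wint_real w x y" "Wint_real w x y \<le> (y - x) * w x"
proof -
  have yI: "y \<in> Ival \<gamma>" using assms by (intro Ival_memI) auto
  have xI: "x \<in> Ival \<gamma>" using assms by (intro Ival_memI) (use ereal_le_less_trans[of x y] in auto)
  have "ennreal ((y - x) * w y) \<le> ennreal (Wint_real w x y)"
    using Wint_ge[OF assms] Wint_eq_Wint_real[OF assms] by simp
  then show "(y - x) * w y \<le> Wint_real w x y" using Wint_real_nonneg by (simp only: ennreal_le_iff)
  have "ennreal (Wint_real w x y) \<le> ennreal ((y - x) * w x)"
    using Wint_le[OF assms] Wint_eq_Wint_real[OF assms] by simp
  moreover have "0 \<le> (y - x) * w x" using weight_pos[OF xI] assms by simp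
  ultimately show "Wint_real w x y \<le> (y - x) * w x" by (simp only: ennreal_le_iff)
qed

lemma Wint_real_split:
  assumes "0 \<le> x" "x \<le> y" "y \<le> z" "ereal z < \<gamma>"
  shows "Wint_real w x z = Wint_real w x y + Wint_real w y z"
proof -
  have y: "ereal y < \<gamma>" by (rule ereal_le_less_trans[OF assms(3,4)])
  have "ennreal (Wint_real w x z) = ennreal (Wint_real w x y) + ennreal (Wint_real w y z)"
    using Wint_split[OF assms] Wint_eq_Wint_real[of x z] Wint_eq_Wint_real[of x y] Wint_eq_Wint_real[of y z] assms y by simp
  also have "\<dots> = ennreal (Wint_real w x y + Wint_real w y z)" by (simp add: ennreal_plus Wint_real_def)
  finally have e: "ennreal (Wint_real w x z) = ennreal (Wint_real w x y + Wint_real w y z)" .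
  have nn1: "0 \<le> Wint_real w x z" and nn2: "0 \<le> Wint_real w x y + Wint_real w y z"
    using Wint_real_nonneg by (simp_all add: add_nonneg_nonneg)
  show ?thesis using ennreal_inj[OF nn1 nn2] e by blast
qed

lemma Wint_real_pos:
  assumes "0 \<le> x" "x < y" "ereal y < \<gamma>"
  shows "Wint_real w x y > 0"
proof -
  have yI: "y \<in> Ival \<gamma>" using assms by (intro Ival_memI) auto
  have "0 < (y - x) * w y" using assms weight_pos[OF yI] by simp
  also have "\<dots> \<le> Wint_real w x y" using Wint_real_bounds(1)[of x y] assms by simp
  finally show ?thesis .
qed

lemma Wint_real_lipschitz_on:
  assumes "0 \<le> a" "ereal a < \<gamma>"
  shows "(w 0)-lipschitz_on {0..a} (Wint_real w 0)"
proof (rule lipschitz_onI)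
  have diff: "dist (Wint_real w 0 y) (Wint_real w 0 x) \<le> w 0 * dist y x"
    if "0 \<le> x" "x \<le> y" "y \<le> a" for x y
  proof -
    have yg: "ereal y < \<gamma>" using that assms(2) by (intro ereal_le_less_trans[of y a])
    have I0: "0 \<in> Ival \<gamma>" and xI: "x \<in> Ival \<gamma>"
      using that yg by (auto intro!: Ival_memI ereal_le_less_trans[of _ y])
    have "Wint_real w 0 y = Wint_real w 0 x + Wint_real w x y"
      using Wint_real_split[of 0 x y] that yg by auto
    moreover note Wint_real_nonneg[of w x y]
    moreover have "Wint_real w x y \<le> (y - x) * w x" using Wint_real_bounds(2)[of x y] that yg by auto
    moreover have "(y - x) * w x \<le> (y - x) * w 0"
      using weight_antimono[OF I0 xI] that by (intro mult_left_mono) auto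
    ultimately show ?thesis using that(2) by (simp add: dist_real_def mult.commute)
  qed
  fix x y assume "x \<in> {0..a}" "y \<in> {0..a}"
  then show "dist (Wint_real w 0 x) (Wint_real w 0 y) \<le> w 0 * dist x y"
    using diff[of x y] diff[of y x] by (cases "x \<le> y") (auto simp: dist_commute)
next
  show "0 \<le> w 0"
    using assms weight_pos[of 0] by (auto intro!: less_imp_le Ival_memI ereal_le_less_trans[of 0 a])
qed

lemma Wint_real_attains:
  assumes a0: "0 < a0" "ereal a0 < \<gamma>" and y: "0 < y" "y \<le> Wint_real w 0 a0"
  shows "\<exists>a. 0 < a \<and> a \<le> a0 \<and> Wint_real w 0 a = y"
proof -
  have "continuous_on {0..a0} (Wint_real w 0)"
    by (rule lipschitz_on_continuous_on[OF Wint_real_lipschitz_on]) (use a0 in auto)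
  then obtain a where a: "0 \<le> a" "a \<le> a0" "Wint_real w 0 a = y"
    using IVT'[of "Wint_real w 0" 0 y a0] y a0 Wint_real_0 by auto
  moreover have "a \<noteq> 0" using a y Wint_real_0 by auto
  ultimately show ?thesis by (intro exI[of _ a]) auto
qed

end

lemma nn_integral_Ici_eq_SUP_Wint:
  assumes w: "weight \<infinity> w"
  shows "(\<integral>\<^sup>+ t\<in>{0..}. ennreal (w t) \<partial>lborel) = (SUP n. Wint w 0 (real n))"
proof -
  let ?F = "\<lambda>n t. ennreal (w t) * indicator {0<..real n} t"
  have "AE t in lborel. ennreal (w t) * indicator {0..} t = (SUP n. ?F n t)"
    using AE_lborel_singleton[of 0]
  proof eventually_elim
    fix t :: real assume t0: "t \<noteq> 0"
    obtain n :: nat where n: "t \<le> real n" using real_arch_simple by blast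
    show "ennreal (w t) * indicator {0..} t = (SUP n. ?F n t)"
    proof (rule antisym)
      show "ennreal (w t) * indicator {0..} t \<le> (SUP n. ?F n t)"
        using t0 n by (intro SUP_upper2[of n]) (auto simp: indicator_def)
      show "(SUP n. ?F n t) \<le> ennreal (w t) * indicator {0..} t"
        by (intro SUP_least) (auto simp: indicator_def)
    qed
  qed
  then have "(\<integral>\<^sup>+ t\<in>{0..}. ennreal (w t) \<partial>lborel) = (\<integral>\<^sup>+ t. (SUP n. ?F n t) \<partial>lborel)"
    by (rule nn_integral_cong_AE)
  also have "\<dots> = (SUP n. integral\<^sup>N lborel (?F n))"
  proof (rule nn_integral_monotone_convergence_SUP)
    show "incseq ?F"
      by (intro incseq_SucI le_funI mult_left_mono) (auto simp: indicator_def)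
    show "\<And>i. ?F i \<in> borel_measurable lborel" using Wint_integrand_measurable[OF w] by simp
  qed
  finally show ?thesis unfolding Wint_def .
qed

lemma Wint_real_unbounded:
  assumes w: "weight \<infinity> w"
  shows "\<exists>b>0. y \<le> Wint_real w 0 b"
proof -
  have inf: "(SUP n. Wint w 0 (real n)) = \<infinity>"
    using w nn_integral_Ici_eq_SUP_Wint[OF w] unfolding weight_def by simp
  have "ennreal y < (SUP n. Wint w 0 (real n))" unfolding inf by simp
  then obtain n :: nat where n: "ennreal y < Wint w 0 (real n)"
    by (auto simp: less_SUP_iff)
  then have "n \<noteq> 0" by (rule contrapos_pn) (simp add: Wint_def)
  moreover have "y \<le> Wint_real w 0 (real n)"
    using less_imp_le[OF n] Wint_eq_Wint_real[OF w, of 0 "real n"] Wint_real_nonneg by simp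
  ultimately show ?thesis by (intro exI[of _ "real n"]) auto
qed

section \<open>The modular and sufficiency\<close>

lemma Qmod_cmult_le:
  assumes "orlicz_fun \<phi>" "0 < c" "c \<le> 1"
  shows "Qmod \<gamma> \<phi> w (\<lambda>x. c * f x) \<le> ennreal c * Qmod \<gamma> \<phi> w f"
proof -
  let ?L = "\<lambda>t. level_fun \<gamma> w (rearr \<gamma> f) t"
  have "Qmod \<gamma> \<phi> w (\<lambda>x. c * f x) =
     (\<integral>\<^sup>+t. phi_ext \<phi> (ennreal c * (?L t / ennreal (w t))) * ennreal (w t) * indicator (Ival \<gamma>) t \<partial>lborel)"
    unfolding Qmod_def level_fun_rearr_cmult[OF assms(2)] by (simp add: ennreal_times_divide)
  also have "\<dots> \<le> (\<integral>\<^sup>+t. ennreal c * (phi_ext \<phi> (?L t / ennreal (w t)) * ennreal (w t) * indicator (Ival \<gamma>) t) \<partial>lborel)"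
    by (intro nn_integral_mono) (auto simp: mult.assoc[symmetric] intro!: mult_right_mono phi_ext_cmult_le[OF assms])
  also have "\<dots> = ennreal c * Qmod \<gamma> \<phi> w f"
    unfolding Qmod_def using assms(2) by (intro nn_integral_cmult_pos)
  finally show ?thesis .
qed

lemma Ival_borel[measurable]: "Ival \<gamma> \<in> sets borel"
proof -
  have "Ival \<gamma> = {t. 0 \<le> t} \<inter> {t. ereal t < \<gamma>}" unfolding Ival_def by auto
  moreover have "{t. ereal t < \<gamma>} \<in> sets borel" by measurable
  ultimately show ?thesis by simp
qed

lemma Qmod_le_Qmod_cmult_add:
  assumes w: "weight \<gamma> w" and g0: "0 < \<gamma>"
    and cmp: "\<forall>x\<ge>0. \<phi>1 x \<le> \<phi>2 (b * x) + K" and b: "b > 0" and K: "K \<ge> 0"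
  shows "Qmod \<gamma> \<phi>1 w f \<le>
    Qmod \<gamma> \<phi>2 w (\<lambda>x. b * f x) + ennreal K * ennreal (w 0) * emeasure lborel (Ival \<gamma>)"
proof -
  let ?L = "\<lambda>t. level_fun \<gamma> w (rearr \<gamma> f) t"
  have I0: "0 \<in> Ival \<gamma>" using g0 by (simp add: Ival_def zero_ereal_def)
  have wle: "w t \<le> w 0" if "t \<in> Ival \<gamma>" for t
    using weight_antimono[OF w I0 that] that by (simp add: Ival_def)
  have "Qmod \<gamma> \<phi>1 w f \<le> (\<integral>\<^sup>+t. phi_ext \<phi>2 (ennreal b * (?L t / ennreal (w t))) * ennreal (w t) * indicator (Ival \<gamma>) t
        + ennreal K * (ennreal (w 0) * indicator (Ival \<gamma>) t) \<partial>lborel)"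
    unfolding Qmod_def
  proof (intro nn_integral_mono)
    fix t
    show "phi_ext \<phi>1 (?L t / ennreal (w t)) * ennreal (w t) * indicator (Ival \<gamma>) t \<le>
      phi_ext \<phi>2 (ennreal b * (?L t / ennreal (w t))) * ennreal (w t) * indicator (Ival \<gamma>) t
        + ennreal K * (ennreal (w 0) * indicator (Ival \<gamma>) t)"
      using phi_ext_mult_le_phi_ext_cmult_add[OF cmp b K wle] by (cases "t \<in> Ival \<gamma>") auto
  qed
  also have "\<dots> \<le> (\<integral>\<^sup>+t. phi_ext \<phi>2 (ennreal b * (?L t / ennreal (w t))) * ennreal (w t) * indicator (Ival \<gamma>) t \<partial>lborel)
      + (\<integral>\<^sup>+t. ennreal K * (ennreal (w 0) * indicator (Ival \<gamma>) t) \<partial>lborel)"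
    by (rule nn_integral_add_le_measurable) measurable
  also have "(\<integral>\<^sup>+t. ennreal K * (ennreal (w 0) * indicator (Ival \<gamma>) t) \<partial>lborel) =
      ennreal K * ennreal (w 0) * emeasure lborel (Ival \<gamma>)"
    using nn_integral_cmult_indicator[of "Ival \<gamma>" lborel "ennreal K * ennreal (w 0)"]
    by (simp add: mult.assoc)
  also have "(\<integral>\<^sup>+t. phi_ext \<phi>2 (ennreal b * (?L t / ennreal (w t))) * ennreal (w t) * indicator (Ival \<gamma>) t \<partial>lborel)
     = Qmod \<gamma> \<phi>2 w (\<lambda>x. b * f x)"
    unfolding Qmod_def level_fun_rearr_cmult[OF b] by (simp add: ennreal_times_divide)
  finally show ?thesis .
qed

lemma Mspace_ex_Qmod_le_1:
  assumes "orlicz_fun \<phi>" "f \<in> Mspace \<gamma> \<phi> w"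
  shows "\<exists>\<epsilon>>0. Qmod \<gamma> \<phi> w (\<lambda>x. f x / \<epsilon>) \<le> 1"
proof -
  obtain k where k: "k > 0" "Qmod \<gamma> \<phi> w (\<lambda>x. k * f x) < \<infinity>"
    using assms(2) unfolding Mspace_def by auto
  define q where "q = enn2real (Qmod \<gamma> \<phi> w (\<lambda>x. k * f x))"
  have q: "Qmod \<gamma> \<phi> w (\<lambda>x. k * f x) = ennreal q" "q \<ge> 0"
    using k(2) unfolding q_def by (auto simp: less_top[symmetric])
  define c where "c = 1 / (q + 1)"
  have c: "0 < c" "c \<le> 1" using q unfolding c_def by auto
  have "Qmod \<gamma> \<phi> w (\<lambda>x. c * (k * f x)) \<le> ennreal c * ennreal q"
    using Qmod_cmult_le[OF assms(1) c, of \<gamma> w "\<lambda>x. k * f x"] q by simp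
  also have "\<dots> = ennreal (q / (q + 1))" using c q by (simp add: ennreal_mult[symmetric] c_def)
  also have "\<dots> \<le> 1" using q by (simp add: ennreal_le_1)
  finally have le: "Qmod \<gamma> \<phi> w (\<lambda>x. c * (k * f x)) \<le> 1" .
  have "(\<lambda>x. f x / (1 / (c * k))) = (\<lambda>x. c * (k * f x))" by (simp add: field_simps)
  then show ?thesis using le c k by (intro exI[of _ "1 / (c * k)"]) auto
qed

definition Mspace_embeds :: "ereal \<Rightarrow> (real \<Rightarrow> real) \<Rightarrow> (real \<Rightarrow> real) \<Rightarrow> (real \<Rightarrow> real) \<Rightarrow> bool" where
  "Mspace_embeds \<gamma> w \<phi>2 \<phi>1 \<longleftrightarrow> Mspace \<gamma> \<phi>2 w \<subseteq> Mspace \<gamma> \<phi>1 w \<and>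
     (\<exists>C\<ge>0. \<forall>f\<in>Mspace \<gamma> \<phi>2 w. Mnorm \<gamma> \<phi>1 w f \<le> C * Mnorm \<gamma> \<phi>2 w f)"

lemma Mnorm_le:
  assumes "\<epsilon> > 0" "Qmod \<gamma> \<phi> w (\<lambda>x. f x / \<epsilon>) \<le> 1"
  shows "Mnorm \<gamma> \<phi> w f \<le> \<epsilon>"
  unfolding Mnorm_def using assms by (intro cInf_lower) (auto intro!: bdd_belowI[of _ 0])

lemma Mnorm_ge:
  assumes "orlicz_fun \<phi>" "f \<in> Mspace \<gamma> \<phi> w"
    and "\<And>\<epsilon>. \<epsilon> > 0 \<Longrightarrow> Qmod \<gamma> \<phi> w (\<lambda>x. f x / \<epsilon>) \<le> 1 \<Longrightarrow> r \<le> \<epsilon>"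
  shows "r \<le> Mnorm \<gamma> \<phi> w f"
  unfolding Mnorm_def using Mspace_ex_Qmod_le_1[OF assms(1,2)] assms(3)
  by (intro cInf_greatest) auto

context
  fixes \<gamma> w \<phi>1 \<phi>2 b D
  assumes o1: "orlicz_fun \<phi>1" and b: "b > 0" and D: "D \<ge> 0"
    and Q: "\<And>f. Qmod \<gamma> \<phi>1 w f \<le> Qmod \<gamma> \<phi>2 w (\<lambda>x. b * f x) + ennreal D"
begin

lemma Mspace_subset_if_Qmod_le: "Mspace \<gamma> \<phi>2 w \<subseteq> Mspace \<gamma> \<phi>1 w"
proof
  fix f assume f: "f \<in> Mspace \<gamma> \<phi>2 w"
  obtain k where k: "k > 0" "Qmod \<gamma> \<phi>2 w (\<lambda>x. k * f x) < \<infinity>"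
    using f unfolding Mspace_def by auto
  have "(\<lambda>x. b * (k / b * f x)) = (\<lambda>x. k * f x)" using b by auto
  then have "Qmod \<gamma> \<phi>1 w (\<lambda>x. k / b * f x) \<le> Qmod \<gamma> \<phi>2 w (\<lambda>x. k * f x) + ennreal D"
    using Q[of "\<lambda>x. k / b * f x"] by simp
  also have "\<dots> < \<infinity>" using k by (simp add: less_top[symmetric])
  finally show "f \<in> Mspace \<gamma> \<phi>1 w" using f k b unfolding Mspace_def
    by (auto intro!: exI[of _ "k / b"])
qed

lemma Qmod_div_le_1_if_Qmod_le:
  assumes e: "\<epsilon> > 0" "Qmod \<gamma> \<phi>2 w (\<lambda>x. f x / \<epsilon>) \<le> 1"
  shows "Qmod \<gamma> \<phi>1 w (\<lambda>x. f x / (b * (1 + D) * \<epsilon>)) \<le> 1"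
proof -
  have eq: "(\<lambda>x. f x / (b * (1 + D) * \<epsilon>)) = (\<lambda>x. (1 / (1 + D)) * (f x / (b * \<epsilon>)))"
    using b D e by (auto simp: field_simps)
  have c: "0 < 1 / (1 + D)" "1 / (1 + D) \<le> 1" using D by auto
  have "Qmod \<gamma> \<phi>1 w (\<lambda>x. f x / (b * (1 + D) * \<epsilon>))
      \<le> ennreal (1 / (1 + D)) * Qmod \<gamma> \<phi>1 w (\<lambda>x. f x / (b * \<epsilon>))"
    unfolding eq by (rule Qmod_cmult_le[OF o1 c])
  also have "\<dots> \<le> ennreal (1 / (1 + D)) * (Qmod \<gamma> \<phi>2 w (\<lambda>x. b * (f x / (b * \<epsilon>))) + ennreal D)"
    by (intro mult_left_mono Q) auto
  also have "(\<lambda>x. b * (f x / (b * \<epsilon>))) = (\<lambda>x. f x / \<epsilon>)" using b e by auto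
  also have "ennreal (1 / (1 + D)) * (Qmod \<gamma> \<phi>2 w (\<lambda>x. f x / \<epsilon>) + ennreal D)
      \<le> ennreal (1 / (1 + D)) * ennreal (1 + D)"
    using e D by (intro mult_left_mono) (auto simp: ennreal_plus[symmetric] add_right_mono)
  also have "\<dots> = ennreal (1 / (1 + D) * (1 + D))" using D by (intro ennreal_mult[symmetric]) auto
  also have "\<dots> = 1" using D by simp
  finally show ?thesis .
qed

lemma Mspace_embeds_if_Qmod_le:
  assumes o2: "orlicz_fun \<phi>2"
  shows "Mspace_embeds \<gamma> w \<phi>2 \<phi>1"
proof -
  define C where "C = b * (1 + D)"
  have C: "C > 0" using b D unfolding C_def by auto
  have "Mnorm \<gamma> \<phi>1 w f \<le> C * Mnorm \<gamma> \<phi>2 w f" if f: "f \<in> Mspace \<gamma> \<phi>2 w" for f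
  proof -
    have "Mnorm \<gamma> \<phi>1 w f / C \<le> Mnorm \<gamma> \<phi>2 w f"
    proof (rule Mnorm_ge[OF o2 f])
      fix \<epsilon> :: real assume "\<epsilon> > 0" "Qmod \<gamma> \<phi>2 w (\<lambda>x. f x / \<epsilon>) \<le> 1"
      then have "Mnorm \<gamma> \<phi>1 w f \<le> C * \<epsilon>"
        unfolding C_def using C by (intro Mnorm_le Qmod_div_le_1_if_Qmod_le) (auto simp: C_def)
      then show "Mnorm \<gamma> \<phi>1 w f / C \<le> \<epsilon>" using C by (simp add: divide_le_eq mult.commute)
    qed
    then show ?thesis using C by (simp add: divide_le_eq mult.commute)
  qed
  then show ?thesis
    unfolding Mspace_embeds_def using Mspace_subset_if_Qmod_le C by (auto intro!: exI[of _ C])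
qed

end

lemma Mspace_embeds_if_orlicz_prec:
  assumes "0 < \<gamma>" "orlicz_fun \<phi>1" "orlicz_fun \<phi>2" "weight \<gamma> w" "orlicz_prec \<phi>1 \<phi>2"
  shows "Mspace_embeds \<gamma> w \<phi>2 \<phi>1"
proof -
  obtain b where b: "b > 0" "\<forall>u\<ge>0. \<phi>1 u \<le> \<phi>2 (b * u) + 0"
    using assms(5) unfolding orlicz_prec_def by auto
  show ?thesis
    using Mspace_embeds_if_Qmod_le[OF assms(2) b(1) order_refl _ assms(3)]
      Qmod_le_Qmod_cmult_add[OF assms(4,1) b(2) b(1) order_refl]
    by simp
qed

lemma Mspace_embeds_if_orlicz_prec_inf:
  assumes "0 < \<gamma>" "\<gamma> < \<infinity>" "orlicz_fun \<phi>1" "orlicz_fun \<phi>2" "weight \<gamma> w"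
    and "orlicz_prec_inf \<phi>1 \<phi>2"
  shows "Mspace_embeds \<gamma> w \<phi>2 \<phi>1"
proof -
  obtain b u0 where b: "b > 0" "u0 \<ge> 0" "\<forall>u\<ge>u0. \<phi>1 u \<le> \<phi>2 (b * u)"
    using assms(6) unfolding orlicz_prec_inf_def by auto
  obtain g where g: "\<gamma> = ereal g" "g > 0" using assms(1,2) by (cases \<gamma>) auto
  have Iv: "Ival \<gamma> = {0..<g}" unfolding g(1) Ival_def by auto
  define K where "K = \<phi>1 u0"
  have K: "K \<ge> 0" unfolding K_def using orlicz_fun_nonneg[OF assms(3) b(2)] .
  have "\<phi>1 x \<le> \<phi>2 (b * x) + K" if x: "x \<ge> 0" for x
  proof (cases "x \<ge> u0")
    case False
    then have "\<phi>1 x \<le> K" unfolding K_def using x by (intro orlicz_fun_mono[OF assms(3)]) auto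
    moreover have "0 \<le> \<phi>2 (b * x)" using x b by (intro orlicz_fun_nonneg[OF assms(4)]) auto
    ultimately show ?thesis by simp
  qed (use b K in force)
  then have "Qmod \<gamma> \<phi>1 w f \<le> Qmod \<gamma> \<phi>2 w (\<lambda>x. b * f x) + ennreal (K * w 0 * g)" for f
    using Qmod_le_Qmod_cmult_add[OF assms(5,1) _ b(1) K, of \<phi>1 \<phi>2 f] K g(2)
      weight_pos[OF assms(5), of 0] Ival_memI[of 0 \<gamma>] assms(1)
    by (simp add: Iv ennreal_mult)
  moreover have "K * w 0 * g \<ge> 0"
    using K g weight_pos[OF assms(5), of 0] Ival_memI[of 0 \<gamma>] assms(1) by simp
  ultimately show ?thesis using Mspace_embeds_if_Qmod_le[OF assms(3) b(1) _ _ assms(4)] by blast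
qed

section \<open>The level function of a characteristic function\<close>

definition chi_lt :: "real \<Rightarrow> real \<Rightarrow> ennreal" where
  "chi_lt a t = (if t < a then 1 else 0)"

definition chi_lt_mass :: "real \<Rightarrow> real \<Rightarrow> real \<Rightarrow> real" where
  "chi_lt_mass a x y = max 0 (min y a - x)"

lemma Gint_chi_lt:
  assumes "x \<le> y"
  shows "Gint (chi_lt a) x y = ennreal (chi_lt_mass a x y)"
proof -
  have "Gint (chi_lt a) x y = (\<integral>\<^sup>+t. indicator ({x<..y} \<inter> {..<a}) t \<partial>lborel)"
    unfolding Gint_def chi_lt_def by (intro nn_integral_cong) (auto simp: indicator_def)
  also have "\<dots> = emeasure lborel ({x<..y} \<inter> {..<a})" by simp
  also have "\<dots> = ennreal (chi_lt_mass a x y)"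
  proof (cases "y < a")
    case True
    then have "{x<..y} \<inter> {..<a} = {x<..y}" by auto
    then show ?thesis using True assms by (simp add: chi_lt_mass_def)
  next
    case False
    show ?thesis
    proof (cases "x < a")
      case True
      then have "{x<..y} \<inter> {..<a} = {x<..<a}" using False by auto
      then show ?thesis using True False by (simp add: chi_lt_mass_def)
    next
      case False2: False
      then have "{x<..y} \<inter> {..<a} = {}" by auto
      then show ?thesis using False False2 by (simp add: chi_lt_mass_def)
    qed
  qed
  finally show ?thesis .
qed

context
  fixes \<gamma> :: ereal and a :: real
  assumes a0: "0 < a" and ag: "ereal a < \<gamma>"
begin

lemma Icc_subset_Ival: "{0..a} \<subseteq> Ival \<gamma>"
  using ag by (auto simp: Ival_def intro: ereal_le_less_trans)

lemma distf_indicator_Icc: "distf \<gamma> (indicator {0..a}) s = (if s < 1 then ennreal a else 0)"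
proof -
  have "{x \<in> Ival \<gamma>. s < ennreal \<bar>indicator {0..a} x :: real\<bar>} = (if s < 1 then {0..a} else {})"
    using Icc_subset_Ival by (auto simp: indicator_def)
  then show ?thesis unfolding distf_def using a0 by simp
qed

lemma rearr_indicator_Icc: "rearr \<gamma> (indicator {0..a}) = chi_lt a"
proof
  fix t
  show "rearr \<gamma> (indicator {0..a}) t = chi_lt a t"
  proof (cases "t < a")
    case True
    have "\<not> ennreal a \<le> ennreal t"
    proof (cases "t < 0")
      case True then have "ennreal t = 0" by (simp add: ennreal_eq_0_iff)
      then show ?thesis using a0 by simp
    next
      case False then show ?thesis using \<open>t < a\<close> by (simp add: ennreal_le_iff)
    qed
    then have "{s. distf \<gamma> (indicator {0..a}) s \<le> ennreal t} = {1..}"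
      unfolding distf_indicator_Icc by (auto simp: not_less)
    then show ?thesis unfolding rearr_def chi_lt_def using True by simp
  next
    case False
    then have "{s. distf \<gamma> (indicator {0..a}) s \<le> ennreal t} = UNIV"
      unfolding distf_indicator_Icc using a0 by (auto simp: ennreal_le_iff)
    then show ?thesis unfolding rearr_def chi_lt_def using False by (simp add: bot_ennreal)
  qed
qed

end

context
  fixes \<gamma> :: ereal and w :: "real \<Rightarrow> real" and a :: real
  assumes w: "weight \<gamma> w" and a0: "0 < a" and ag: "ereal a < \<gamma>"
begin

lemma Gint_Wint_ratio_chi_lt:
  assumes "0 \<le> x" "x < t" "ereal t < \<gamma>"
  shows "Gint (chi_lt a) x t / Wint w x t = ennreal (chi_lt_mass a x t / Wint_real w x t)"
proof -
  have "Wint w x t = ennreal (Wint_real w x t)" using Wint_eq_Wint_real[OF w] assms by simp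
  moreover have "Wint_real w x t > 0" using Wint_real_pos[OF w] assms by simp
  moreover have "chi_lt_mass a x t \<ge> 0" by (simp add: chi_lt_mass_def)
  ultimately show ?thesis using Gint_chi_lt[of x t] assms by (simp add: divide_ennreal)
qed

lemma level_interval_chi_lt_iff:
  "level_interval \<gamma> w (chi_lt a) x y \<longleftrightarrow> 0 \<le> x \<and> x < y \<and> ereal y < \<gamma> \<and>
     (\<forall>t\<in>{x<..y}. chi_lt_mass a x t / Wint_real w x t \<le> chi_lt_mass a x y / Wint_real w x y)"
proof -
  have "0 \<le> x \<Longrightarrow> x < y \<Longrightarrow> ereal y < \<gamma> \<Longrightarrow> t \<in> {x<..y} \<Longrightarrow>
     (Gint (chi_lt a) x t / Wint w x t \<le> Gint (chi_lt a) x y / Wint w x y) =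
     (chi_lt_mass a x t / Wint_real w x t \<le> chi_lt_mass a x y / Wint_real w x y)" for t
  proof -
    assume as: "0 \<le> x" "x < y" "ereal y < \<gamma>" "t \<in> {x<..y}"
    have tg: "ereal t < \<gamma>" using as by (intro ereal_le_less_trans[of t y]) auto
    have nn: "0 \<le> chi_lt_mass a x y / Wint_real w x y"
      using Wint_real_pos[OF w, of x y] as by (simp add: chi_lt_mass_def)
    show ?thesis using Gint_Wint_ratio_chi_lt[of x t] Gint_Wint_ratio_chi_lt[of x y] as tg nn by (simp add: ennreal_le_iff)
  qed
  then show ?thesis unfolding level_interval_def by auto
qed

lemma level_interval_chi_lt_not_straddle:
  assumes "level_interval \<gamma> w (chi_lt a) x y" "x < a" "a < y"
  shows False
proof -
  have L: "0 \<le> x" "x < y" "ereal y < \<gamma>" "\<forall>t\<in>{x<..y}. chi_lt_mass a x t / Wint_real w x t \<le> chi_lt_mass a x y / Wint_real w x y"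
    using assms(1) unfolding level_interval_chi_lt_iff by auto
  have "chi_lt_mass a x a / Wint_real w x a \<le> chi_lt_mass a x y / Wint_real w x y" using L(4) assms by auto
  moreover have "chi_lt_mass a x a = a - x" "chi_lt_mass a x y = a - x" using assms by (auto simp: chi_lt_mass_def)
  moreover have p1: "Wint_real w x a > 0" using Wint_real_pos[OF w, of x a] L assms ag by auto
  moreover have "Wint_real w x y = Wint_real w x a + Wint_real w a y" using Wint_real_split[OF w, of x a y] L assms by auto
  moreover have "Wint_real w a y > 0" using Wint_real_pos[OF w, of a y] L assms by auto
  ultimately have h: "(a - x) / Wint_real w x a \<le> (a - x) / (Wint_real w x a + Wint_real w a y)" "Wint_real w a y > 0" "a - x > 0" "Wint_real w x a > 0"
    using assms by auto
  have "(a - x) / (Wint_real w x a + Wint_real w a y) < (a - x) / Wint_real w x a"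
    by (rule divide_strict_left_mono) (use h in auto)
  then show False using h(1) by linarith
qed

text \<open>Since \<open>w\<close> decreases, its average over \<open>(0,t]\<close> dominates its average over \<open>(t,a]\<close>.\<close>
lemma level_interval_chi_lt: "level_interval \<gamma> w (chi_lt a) 0 a"
  unfolding level_interval_chi_lt_iff
proof (intro conjI ballI)
  fix t assume t: "t \<in> {0<..a}"
  define A where "A = Wint_real w 0 t"
  define B where "B = Wint_real w t a"
  have tI: "t \<in> Ival \<gamma>" using t ag by (intro Ival_memI) (auto intro: ereal_le_less_trans[of t a])
  have tg: "ereal t < \<gamma>" using t ag by (intro ereal_le_less_trans[of t a]) auto
  have A0: "A > 0" unfolding A_def using Wint_real_pos[OF w, of 0 t] t tg by auto
  have Alow: "t * w t \<le> A" unfolding A_def using Wint_real_bounds(1)[OF w, of 0 t] t tg by auto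
  have Bup: "B \<le> (a - t) * w t" unfolding B_def using Wint_real_bounds(2)[OF w, of t a] t ag by auto
  have B0: "B \<ge> 0" unfolding B_def by (rule Wint_real_nonneg)
  have Wa: "Wint_real w 0 a = A + B" unfolding A_def B_def using Wint_real_split[OF w, of 0 t a] t ag by auto
  have "t * B \<le> t * ((a - t) * w t)" using Bup t by (intro mult_left_mono) auto
  also have "\<dots> = (a - t) * (t * w t)" by simp
  also have "\<dots> \<le> (a - t) * A" using Alow t by (intro mult_left_mono) auto
  finally have key: "t * B \<le> (a - t) * A" .
  have "t * (A + B) \<le> a * A" using key by (simp add: algebra_simps)
  then have "t / A \<le> a / (A + B)" using A0 B0 by (simp add: field_simps)
  moreover have "chi_lt_mass a 0 t = t" "chi_lt_mass a 0 a = a" using t a0 by (auto simp: chi_lt_mass_def)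
  ultimately show "chi_lt_mass a 0 t / Wint_real w 0 t \<le> chi_lt_mass a 0 a / Wint_real w 0 a" unfolding Wa A_def by simp
qed (use a0 ag in auto)

lemma max_level_interval_chi_lt: "max_level_interval \<gamma> w (chi_lt a) 0 a"
  unfolding max_level_interval_def
proof (rule conjI[OF level_interval_chi_lt], intro allI impI)
  fix a' b' assume h: "level_interval \<gamma> w (chi_lt a) a' b' \<and> {0<..a} \<subseteq> {a'<..b'}"
  have L: "0 \<le> a'" using h unfolding level_interval_def by auto
  have "a \<in> {a'<..b'}" using h a0 by auto
  then have ab: "a' < a" "a \<le> b'" by auto
  have "a' = 0"
  proof (rule ccontr)
    assume "a' \<noteq> 0"
    then have "a' \<in> {0<..a}" using L ab by auto
    then show False using h by auto
  qed
  moreover have "b' = a"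
  proof (rule ccontr)
    assume "b' \<noteq> a"
    then have "a < b'" using ab by auto
    then show False using level_interval_chi_lt_not_straddle[of a' b'] h ab by auto
  qed
  ultimately show "a' = 0 \<and> b' = a" by simp
qed

lemma max_level_interval_chi_lt_unique:
  assumes t: "0 < t" "t \<le> a" and m: "max_level_interval \<gamma> w (chi_lt a) x y" and xy: "t \<in> {x<..y}"
  shows "x = 0 \<and> y = a"
proof -
  have L: "level_interval \<gamma> w (chi_lt a) x y" using m unfolding max_level_interval_def by auto
  have x0: "0 \<le> x" using L unfolding level_interval_def by auto
  have "y \<le> a"
  proof (rule ccontr)
    assume "\<not> y \<le> a"
    then show False using level_interval_chi_lt_not_straddle[OF L] xy t by auto
  qed
  then have "{x<..y} \<subseteq> {0<..a}" using x0 by auto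
  then have "0 = x \<and> a = y" using m level_interval_chi_lt unfolding max_level_interval_def by blast
  then show ?thesis by simp
qed

lemma Gint_chi_lt_beyond:
  assumes t: "a < t" and m: "max_level_interval \<gamma> w (chi_lt a) x y" and xy: "t \<in> {x<..y}"
  shows "Gint (chi_lt a) x y = 0"
proof -
  have L: "level_interval \<gamma> w (chi_lt a) x y" using m unfolding max_level_interval_def by auto
  have "a \<le> x"
  proof (rule ccontr)
    assume "\<not> a \<le> x"
    then show False using level_interval_chi_lt_not_straddle[OF L] xy t by auto
  qed
  moreover have "x \<le> y" using xy by auto
  ultimately show ?thesis using Gint_chi_lt[of x y] by (simp add: chi_lt_mass_def)
qed

lemma level_fun_chi_lt_le:
  assumes t: "0 < t" "t \<le> a"
  shows "level_fun \<gamma> w (chi_lt a) t = ennreal (a / Wint_real w 0 a) * ennreal (w t)"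
proof -
  let ?P = "\<lambda>(x, y). max_level_interval \<gamma> w (chi_lt a) x y \<and> t \<in> {x<..y}"
  have P0: "?P (0, a)" using max_level_interval_chi_lt t by auto
  then have ex: "\<exists>x y. max_level_interval \<gamma> w (chi_lt a) x y \<and> t \<in> {x<..y}" by auto
  have "?P (Eps ?P)" using P0 by (rule someI)
  moreover obtain x y where xy: "Eps ?P = (x, y)" by (cases "Eps ?P")
  ultimately have "x = 0 \<and> y = a" using max_level_interval_chi_lt_unique[OF t] by auto
  then have E: "Eps ?P = (0, a)" using xy by simp
  have "level_fun \<gamma> w (chi_lt a) t = Gint (chi_lt a) 0 a / Wint w 0 a * ennreal (w t)"
    unfolding level_fun_def using ex E by simp
  also have "\<dots> = ennreal (chi_lt_mass a 0 a / Wint_real w 0 a) * ennreal (w t)"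
    using Gint_Wint_ratio_chi_lt[of 0 a] a0 ag by simp
  also have "chi_lt_mass a 0 a = a" using a0 by (simp add: chi_lt_mass_def)
  finally show ?thesis .
qed

lemma level_fun_chi_lt_gt:
  assumes t: "a < t"
  shows "level_fun \<gamma> w (chi_lt a) t = 0"
proof (cases "\<exists>x y. max_level_interval \<gamma> w (chi_lt a) x y \<and> t \<in> {x<..y}")
  case True
  let ?P = "\<lambda>(x, y). max_level_interval \<gamma> w (chi_lt a) x y \<and> t \<in> {x<..y}"
  from True obtain x0 y0 where "?P (x0, y0)" by auto
  then have "?P (Eps ?P)" by (rule someI)
  moreover obtain x y where xy: "Eps ?P = (x, y)" by (cases "Eps ?P")
  ultimately have "Gint (chi_lt a) x y = 0" using Gint_chi_lt_beyond[OF t] by auto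
  then show ?thesis unfolding level_fun_def using True xy by simp
next
  case False
  then show ?thesis unfolding level_fun_def if_not_P[OF False] using t by (simp add: chi_lt_def)
qed

lemma Qmod_integrand_cmult_indicator_Icc:
  assumes o: "orlicz_fun \<phi>" and c: "c > 0" and t0: "t \<noteq> 0"
  shows "phi_ext \<phi> (level_fun \<gamma> w (rearr \<gamma> (\<lambda>x. c * indicator {0..a} x)) t / ennreal (w t))
      * ennreal (w t) * indicator (Ival \<gamma>) t
    = ennreal (\<phi> (c * a / Wint_real w 0 a)) * (ennreal (w t) * indicator {0<..a} t)"
proof -
  define W where "W = Wint_real w 0 a"
  have W0: "W > 0" unfolding W_def using Wint_real_pos[OF w, of 0 a] a0 ag by auto
  have LF: "level_fun \<gamma> w (rearr \<gamma> (\<lambda>x. c * indicator {0..a} x)) t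
      = ennreal c * level_fun \<gamma> w (chi_lt a) t"
    using level_fun_rearr_cmult[OF c, of \<gamma> w "indicator {0..a}"] rearr_indicator_Icc[OF a0 ag]
    by simp
  show ?thesis
  proof (cases "t \<in> {0<..a}")
    case True
    have tI: "t \<in> Ival \<gamma>" using True ag by (intro Ival_memI) (auto intro: ereal_le_less_trans[of t a])
    have wt: "w t > 0" using weight_pos[OF w tI] .
    have "ennreal c * (ennreal (a / W) * ennreal (w t)) / ennreal (w t) = ennreal (c * (a / W) * w t / w t)"
      using wt W0 c a0 by (simp add: ennreal_mult[symmetric] divide_ennreal)
    also have "c * (a / W) * w t / w t = c * a / W" using wt by simp
    finally have e: "ennreal c * (ennreal (a / W) * ennreal (w t)) / ennreal (w t) = ennreal (c * a / W)" .
    have tt: "0 < t" "t \<le> a" using True by auto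
    show ?thesis unfolding LF level_fun_chi_lt_le[OF tt, folded W_def] W_def[symmetric]
      using True tI e c a0 W0 by (simp add: phi_ext_def)
  next
    case False
    show ?thesis
    proof (cases "t \<in> Ival \<gamma>")
      case True
      then have "a < t" using False t0 by (auto simp: Ival_def)
      then show ?thesis unfolding LF level_fun_chi_lt_gt[OF \<open>a < t\<close>] using True False o
        by (simp add: phi_ext_def orlicz_fun_def)
    qed (use False in simp)
  qed
qed

lemma Qmod_cmult_indicator_Icc:
  assumes o: "orlicz_fun \<phi>" and c: "c > 0"
  shows "Qmod \<gamma> \<phi> w (\<lambda>x. c * indicator {0..a} x)
    = ennreal (\<phi> (c * a / Wint_real w 0 a) * Wint_real w 0 a)"
proof -
  define W where "W = Wint_real w 0 a"
  have W0: "W > 0" unfolding W_def using Wint_real_pos[OF w, of 0 a] a0 ag by auto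
  have "Qmod \<gamma> \<phi> w (\<lambda>x. c * indicator {0..a} x)
      = (\<integral>\<^sup>+t. ennreal (\<phi> (c * a / W)) * (ennreal (w t) * indicator {0<..a} t) \<partial>lborel)"
    unfolding Qmod_def W_def using AE_lborel_singleton[of 0]
    by (intro nn_integral_cong_AE) (auto elim!: eventually_mono
        simp: Qmod_integrand_cmult_indicator_Icc[OF o c])
  also have "\<dots> = ennreal (\<phi> (c * a / W)) * Wint w 0 a"
    unfolding Wint_def using Wint_integrand_measurable[OF w, of 0 a] ag by (subst nn_integral_cmult) auto
  also have "\<dots> = ennreal (\<phi> (c * a / W) * W)"
    using Wint_eq_Wint_real[OF w, of 0 a] a0 ag W0 orlicz_fun_nonneg[OF o, of "c * a / W"] c
    by (simp add: ennreal_mult W_def)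
  finally show ?thesis unfolding W_def .
qed

lemma Qmod_div_indicator_Icc:
  assumes "orlicz_fun \<phi>" "\<epsilon> > 0"
  shows "Qmod \<gamma> \<phi> w (\<lambda>x. indicator {0..a} x / \<epsilon>)
    = ennreal (\<phi> (a / (\<epsilon> * Wint_real w 0 a)) * Wint_real w 0 a)"
proof -
  have "(\<lambda>x. indicator {0..a} x / \<epsilon>) = (\<lambda>x. (1 / \<epsilon>) * indicator {0..a} x)" by auto
  then show ?thesis using Qmod_cmult_indicator_Icc[OF assms(1), of "1 / \<epsilon>"] assms(2) by simp
qed

lemma indicator_Icc_in_Mspace:
  assumes "orlicz_fun \<phi>"
  shows "indicator {0..a} \<in> Mspace \<gamma> \<phi> w"
proof -
  have "(indicator {0..a} :: real \<Rightarrow> real) \<in> borel_measurable (restrict_space lebesgue (Ival \<gamma>))"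
    by (intro measurable_restrict_space1 measurable_completion borel_measurable_indicator) simp
  moreover have "Qmod \<gamma> \<phi> w (\<lambda>x. 1 * indicator {0..a} x) < \<infinity>"
    using Qmod_cmult_indicator_Icc[OF assms, of 1] by simp
  ultimately show ?thesis unfolding Mspace_def by (auto intro!: exI[of _ 1])
qed

lemma Mnorm_indicator_Icc_le:
  assumes "orlicz_fun \<phi>" "u > 0" "Wint_real w 0 a * \<phi> u \<le> 1"
  shows "Mnorm \<gamma> \<phi> w (indicator {0..a}) \<le> a / (Wint_real w 0 a * u)"
proof -
  have W0: "Wint_real w 0 a > 0" using Wint_real_pos[OF w, of 0 a] a0 ag by auto
  have e: "a / (Wint_real w 0 a * u) > 0" using a0 W0 assms(2) by simp
  have "a / (a / (Wint_real w 0 a * u) * Wint_real w 0 a) = u" using a0 W0 assms(2) by simp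
  then have "Qmod \<gamma> \<phi> w (\<lambda>x. indicator {0..a} x / (a / (Wint_real w 0 a * u)))
      = ennreal (\<phi> u * Wint_real w 0 a)"
    using Qmod_div_indicator_Icc[OF assms(1) e] by simp
  then show ?thesis
    using assms(3) by (intro Mnorm_le[OF e]) (simp add: mult.commute ennreal_le_1)
qed

lemma Mnorm_indicator_Icc_ge:
  assumes o: "orlicz_fun \<phi>" and u: "u > 0" "Wint_real w 0 a * \<phi> u = 1"
  shows "a / (Wint_real w 0 a * u) \<le> Mnorm \<gamma> \<phi> w (indicator {0..a})"
proof (rule Mnorm_ge[OF o indicator_Icc_in_Mspace[OF o]])
  define W where "W = Wint_real w 0 a"
  have W0: "W > 0" unfolding W_def using Wint_real_pos[OF w, of 0 a] a0 ag by auto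
  fix \<epsilon> :: real assume e: "\<epsilon> > 0" "Qmod \<gamma> \<phi> w (\<lambda>x. indicator {0..a} x / \<epsilon>) \<le> 1"
  then have "\<phi> (a / (\<epsilon> * W)) * W \<le> 1"
    using Qmod_div_indicator_Icc[OF o e(1)] by (simp add: W_def ennreal_le_1)
  also have "1 = \<phi> u * W" using u(2) by (simp add: W_def mult.commute)
  finally have "\<phi> (a / (\<epsilon> * W)) \<le> \<phi> u" using W0 by (rule mult_right_le_imp_le)
  then have "a / (\<epsilon> * W) \<le> u"
    using orlicz_fun_strict_mono[OF o, of u "a / (\<epsilon> * W)"] u(1) by (meson not_le less_imp_le)
  then show "a / (Wint_real w 0 a * u) \<le> \<epsilon>"
    using e(1) W0 u(1) a0 by (simp add: W_def[symmetric] field_simps)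
qed

lemma orlicz_fun_le_if_Mnorm_le:
  assumes o1: "orlicz_fun \<phi>1" and o2: "orlicz_fun \<phi>2" and C: "C \<ge> 0"
    and H: "\<forall>f\<in>Mspace \<gamma> \<phi>2 w. Mnorm \<gamma> \<phi>1 w f \<le> C * Mnorm \<gamma> \<phi>2 w f"
    and u: "u > 0" "Wint_real w 0 a * \<phi>1 u = 1"
  shows "\<phi>1 u \<le> \<phi>2 ((C + 1) * u)"
proof (rule ccontr)
  define W where "W = Wint_real w 0 a"
  have W0: "W > 0" unfolding W_def using Wint_real_pos[OF w, of 0 a] a0 ag by auto
  assume "\<not> ?thesis"
  then have "W * \<phi>2 ((C + 1) * u) \<le> W * \<phi>1 u" using W0 by (intro mult_left_mono) auto
  then have "W * \<phi>2 ((C + 1) * u) \<le> 1" using u(2) by (simp add: W_def)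
  then have "Mnorm \<gamma> \<phi>2 w (indicator {0..a}) \<le> a / (W * ((C + 1) * u))"
    using Mnorm_indicator_Icc_le[OF o2, of "(C + 1) * u"] u C by (simp add: W_def)
  moreover have "a / (W * u) \<le> Mnorm \<gamma> \<phi>1 w (indicator {0..a})"
    using Mnorm_indicator_Icc_ge[OF o1 u] by (simp add: W_def)
  ultimately have "a / (W * u) \<le> C * (a / (W * ((C + 1) * u)))"
    using H indicator_Icc_in_Mspace[OF o2] C by (meson mult_left_mono order_trans)
  also have "\<dots> = C / (C + 1) * (a / (W * u))" using C by (simp add: field_simps)
  also have "\<dots> < 1 * (a / (W * u))" using C W0 u(1) a0 by (intro mult_strict_right_mono) auto
  finally show False by simp
qed

end

section \<open>Necessity\<close>

lemma orlicz_fun_le_if_embeds: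
  assumes w: "weight \<gamma> w" and o1: "orlicz_fun \<phi>1" and o2: "orlicz_fun \<phi>2" and C: "C \<ge> 0"
    and H: "\<forall>f\<in>Mspace \<gamma> \<phi>2 w. Mnorm \<gamma> \<phi>1 w f \<le> C * Mnorm \<gamma> \<phi>2 w f"
    and a0: "0 < a0" "ereal a0 < \<gamma>" and u: "u > 0" "1 \<le> Wint_real w 0 a0 * \<phi>1 u"
  shows "\<phi>1 u \<le> \<phi>2 ((C + 1) * u)"
proof -
  have p: "\<phi>1 u > 0" using o1 u(1) unfolding orlicz_fun_def by auto
  obtain a where a: "0 < a" "a \<le> a0" "Wint_real w 0 a = 1 / \<phi>1 u"
    using Wint_real_attains[OF w a0, of "1 / \<phi>1 u"] p u(2) by (auto simp: field_simps)
  have "ereal a < \<gamma>" using a a0 by (intro ereal_le_less_trans[of a a0]) auto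
  then show ?thesis using orlicz_fun_le_if_Mnorm_le[OF w a(1) _ o1 o2 C H u(1)] a(3) p by simp
qed

lemma orlicz_prec_if_embeds:
  assumes w: "weight \<infinity> w" and o1: "orlicz_fun \<phi>1" and o2: "orlicz_fun \<phi>2"
    and "Mspace_embeds \<infinity> w \<phi>2 \<phi>1"
  shows "orlicz_prec \<phi>1 \<phi>2"
proof -
  obtain C where C: "C \<ge> 0" "\<forall>f\<in>Mspace \<infinity> \<phi>2 w. Mnorm \<infinity> \<phi>1 w f \<le> C * Mnorm \<infinity> \<phi>2 w f"
    using assms(4) unfolding Mspace_embeds_def by auto
  have "\<phi>1 u \<le> \<phi>2 ((C + 1) * u)" if u: "u \<ge> 0" for u
  proof (cases "u = 0")
    case True then show ?thesis using o1 o2 by (simp add: orlicz_fun_def)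
  next
    case False
    then have u0: "u > 0" using u by simp
    then have p: "\<phi>1 u > 0" using o1 unfolding orlicz_fun_def by auto
    obtain b where b: "b > 0" "1 / \<phi>1 u \<le> Wint_real w 0 b"
      using Wint_real_unbounded[OF w] by blast
    then have "1 \<le> Wint_real w 0 b * \<phi>1 u" using p by (simp add: field_simps)
    then show ?thesis using orlicz_fun_le_if_embeds[OF w o1 o2 C b(1) _ u0] by simp
  qed
  moreover have "C + 1 > 0" using C by simp
  ultimately show ?thesis unfolding orlicz_prec_def by blast
qed

lemma orlicz_prec_inf_if_embeds:
  assumes "0 < \<gamma>" "\<gamma> < \<infinity>" and w: "weight \<gamma> w" and o1: "orlicz_fun \<phi>1" and o2: "orlicz_fun \<phi>2"
    and "Mspace_embeds \<gamma> w \<phi>2 \<phi>1"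
  shows "orlicz_prec_inf \<phi>1 \<phi>2"
proof -
  obtain C where C: "C \<ge> 0" "\<forall>f\<in>Mspace \<gamma> \<phi>2 w. Mnorm \<gamma> \<phi>1 w f \<le> C * Mnorm \<gamma> \<phi>2 w f"
    using assms(6) unfolding Mspace_embeds_def by auto
  obtain g where g: "\<gamma> = ereal g" "g > 0" using assms(1,2) by (cases \<gamma>) auto
  define a0 where "a0 = g / 2"
  have a0: "0 < a0" "ereal a0 < \<gamma>" unfolding a0_def g(1) using g(2) by auto
  define W where "W = Wint_real w 0 a0"
  have W: "W > 0" unfolding W_def using Wint_real_pos[OF w, of 0 a0] a0 by auto
  have p1: "\<phi>1 1 > 0" using o1 unfolding orlicz_fun_def by auto
  define u0 where "u0 = max 1 (1 / (W * \<phi>1 1))"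
  have "\<phi>1 u \<le> \<phi>2 ((C + 1) * u)" if u: "u \<ge> u0" for u
  proof -
    have "1 \<le> W * (u * \<phi>1 1)" using u W p1 by (simp add: u0_def field_simps)
    also have "\<dots> \<le> W * \<phi>1 u"
      using orlicz_fun_ge_linear[OF o1, of u] u W by (intro mult_left_mono) (auto simp: u0_def)
    finally have "1 \<le> W * \<phi>1 u" .
    then show ?thesis
      using orlicz_fun_le_if_embeds[OF w o1 o2 C a0] u by (simp add: W_def u0_def)
  qed
  moreover have "C + 1 > 0" "u0 \<ge> 0" using C by (auto simp: u0_def)
  ultimately show ?thesis unfolding orlicz_prec_inf_def by blast
qed

theorem mainTheorem13:
  fixes \<gamma> :: ereal and \<phi>1 \<phi>2 w :: "real \<Rightarrow> real"
  assumes "0 < \<gamma>"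
    and "orlicz_fun \<phi>1" and "orlicz_fun \<phi>2"
    and "weight \<gamma> w"
  shows "(if \<gamma> = \<infinity> then orlicz_prec \<phi>1 \<phi>2 else orlicz_prec_inf \<phi>1 \<phi>2) \<longleftrightarrow>
         (Mspace \<gamma> \<phi>2 w \<subseteq> Mspace \<gamma> \<phi>1 w \<and>
          (\<exists>C\<ge>0. \<forall>f\<in>Mspace \<gamma> \<phi>2 w. Mnorm \<gamma> \<phi>1 w f \<le> C * Mnorm \<gamma> \<phi>2 w f))"
proof (cases "\<gamma> = \<infinity>")
  case True
  have "orlicz_prec \<phi>1 \<phi>2 \<longleftrightarrow> Mspace_embeds \<gamma> w \<phi>2 \<phi>1"
    using Mspace_embeds_if_orlicz_prec[OF assms] orlicz_prec_if_embeds[OF assms(4,2,3)[unfolded True]]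
    unfolding True by blast
  with True show ?thesis by (simp add: Mspace_embeds_def)
next
  case False
  then have "\<gamma> < \<infinity>" by (simp add: less_top)
  then have "orlicz_prec_inf \<phi>1 \<phi>2 \<longleftrightarrow> Mspace_embeds \<gamma> w \<phi>2 \<phi>1"
    using Mspace_embeds_if_orlicz_prec_inf[OF assms(1) _ assms(2-4)]
      orlicz_prec_inf_if_embeds[OF assms(1) _ assms(4,2,3)] by blast
  with False show ?thesis by (simp add: Mspace_embeds_def)
qed

end
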